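(* Let $n,m\in\mathbb{N}_0$ with $m\geq n-1$. Then $L_n^{(m)}(x)>0$ for all $x\in[0,1)$. Moreover $L_n^{(m)}(1)>0$ as well, provided $(n,m)\neq(1,0)$.
   Context: Generalized Laguerre polynomials: $L_n^{(\alpha)}(x)=\sum_{j=0}^n(-1)^j\binom{n+\alpha}{n-j}\frac{x^j}{j!}$. *)

theory Defs
  imports Complex_Main
begin

definition laguerre :: "nat \<Rightarrow> real \<Rightarrow> real \<Rightarrow> real" where
  "laguerre n \<alpha> x = (\<Sum>j=0..n. (-1)^j * ((real n + \<alpha>) gchoose (n - j)) * x^j / fact j)"

end

theory Submission
  imports Defs
begin

text \<open>Write \<open>L_n^(m)(x) = \<Sum>\<^sub>j (-1)^j t_j\<close>. Consecutive terms have ratio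
  \<open>t_(j+1) / t_j = x (n - j) / ((m + j + 1) (j + 1))\<close>, which is at most \<open>x \<le> 1\<close> as soon as
  \<open>n \<le> m + 1\<close>. So the terms are non-increasing, and grouping the alternating sum into pairs
  \<open>t_(2i) - t_(2i+1)\<close> writes it as a sum of non-negative numbers. One pair is strictly positive:
  \<open>t_0 > t_1\<close> unless \<open>x = 1\<close> and \<open>n = m + 1\<close>, and in that case \<open>t_2 > t_3\<close> as long as
  \<open>n \<ge> 2\<close>, i.e. \<open>(n, m) \<noteq> (1, 0)\<close>.\<close>

lemma alternating_sum_pos:
  fixes a :: "nat \<Rightarrow> real"
  assumes antimono: "\<And>j. a (Suc j) \<le> a j"
    and "i \<le> M" and "a (Suc (2 * i)) < a (2 * i)"
  shows "0 < (\<Sum>j\<le>Suc (2 * M). (-1) ^ j * a j)"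
proof -
  have "(\<Sum>j\<le>Suc (2 * M). (-1) ^ j * a j) = (\<Sum>k\<le>M. a (2 * k) - a (Suc (2 * k)))"
    using sum.in_pairs_0[of "\<lambda>j. (-1) ^ j * a j" M] by simp
  also have "0 < \<dots>"
    using assms by (intro sum_pos2[of _ i]) (auto simp: antimono)
  finally show ?thesis .
qed

lemma binomial_Suc_mult: "(N choose Suc k) * Suc k = (N choose k) * (N - k)"
  by (metis binomial_absorb_comp binomial_absorption mult.commute)

text \<open>The coefficient \<open>binom(n+m, n-j)\<close> is written as \<open>binom(n+m, m+j)\<close>, so that the term
  vanishes for \<open>j > n\<close> instead of becoming \<open>x^j / j!\<close> through truncated subtraction.\<close>
definition laguerre_term :: "nat \<Rightarrow> nat \<Rightarrow> real \<Rightarrow> nat \<Rightarrow> real" where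
  "laguerre_term n m x j = real ((n + m) choose (m + j)) * x ^ j / fact j"

lemma laguerre_term_eq_0: "n < j \<Longrightarrow> laguerre_term n m x j = 0"
  by (simp add: laguerre_term_def)

lemma laguerre_term_nonneg: "0 \<le> x \<Longrightarrow> 0 \<le> laguerre_term n m x j"
  by (simp add: laguerre_term_def)

lemma laguerre_term_0_pos: "0 < laguerre_term n m x 0"
  by (simp add: laguerre_term_def)

lemma laguerre_term_pos: "0 < x \<Longrightarrow> j \<le> n \<Longrightarrow> 0 < laguerre_term n m x j"
  by (simp add: laguerre_term_def)

lemma laguerre_eq_sum_laguerre_term:
  assumes "n \<le> k"
  shows "laguerre n (real m) x = (\<Sum>j\<le>k. (-1) ^ j * laguerre_term n m x j)"
proof -
  have "(real n + real m) gchoose (n - j) = real ((n + m) choose (m + j))" if "j \<le> n" for j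
  proof -
    have "(n + m) choose (n - j) = (n + m) choose (m + j)"
      using that binomial_symmetric[of "n - j" "n + m"] by simp
    then show ?thesis
      by (metis binomial_gbinomial of_nat_add)
  qed
  then have "laguerre n (real m) x = (\<Sum>j\<le>n. (-1) ^ j * laguerre_term n m x j)"
    unfolding laguerre_def laguerre_term_def atLeast0AtMost by (intro sum.cong) auto
  also have "\<dots> = (\<Sum>j\<le>k. (-1) ^ j * laguerre_term n m x j)"
    using assms by (intro sum.mono_neutral_left) (auto simp: laguerre_term_eq_0)
  finally show ?thesis .
qed

lemma laguerre_term_Suc:
  "laguerre_term n m x (Suc j) * (real (m + j + 1) * real (j + 1)) =
     laguerre_term n m x j * x * real (n - j)"
proof -
  have "(n + m choose Suc (m + j)) * Suc (m + j) = (n + m choose (m + j)) * (n - j)"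
    using binomial_Suc_mult[of "n + m" "m + j"] by simp
  then have binom: "real (n + m choose Suc (m + j)) * real (m + j + 1) =
      real (n + m choose (m + j)) * real (n - j)"
    by (metis of_nat_mult add.commute plus_1_eq_Suc)
  have "laguerre_term n m x (Suc j) * (real (m + j + 1) * real (j + 1)) =
      real (n + m choose Suc (m + j)) * real (m + j + 1) * x ^ Suc j / fact j"
    by (simp add: laguerre_term_def fact_Suc field_simps del: of_nat_Suc)
  also have "\<dots> = real (n + m choose (m + j)) * real (n - j) * x ^ Suc j / fact j"
    by (simp only: binom)
  also have "\<dots> = laguerre_term n m x j * x * real (n - j)"
    by (simp add: laguerre_term_def)
  finally show ?thesis .
qed

lemma laguerre_term_Suc_le:
  assumes "0 \<le> x" "x \<le> 1" "n \<le> m + 1"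
  shows "laguerre_term n m x (Suc j) \<le> laguerre_term n m x j"
proof -
  have "x * real (n - j) \<le> real (n - j)"
    using assms by (intro mult_left_le_one_le) auto
  also have "\<dots> \<le> real (m + j + 1)"
    using assms by simp
  also have "\<dots> \<le> real (m + j + 1) * real (j + 1)"
    by simp
  finally have "laguerre_term n m x (Suc j) * (real (m + j + 1) * real (j + 1)) \<le>
      laguerre_term n m x j * (real (m + j + 1) * real (j + 1))"
    unfolding laguerre_term_Suc mult.assoc
    using assms laguerre_term_nonneg by (intro mult_left_mono) auto
  then show ?thesis
    by (rule mult_right_le_imp_le) simp
qed

lemma laguerre_term_Suc_less:
  assumes "0 < laguerre_term n m x j" "x * real (n - j) < real (m + j + 1) * real (j + 1)"
  shows "laguerre_term n m x (Suc j) < laguerre_term n m x j"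
proof -
  have "laguerre_term n m x (Suc j) * (real (m + j + 1) * real (j + 1)) <
      laguerre_term n m x j * (real (m + j + 1) * real (j + 1))"
    unfolding laguerre_term_Suc mult.assoc using assms by (intro mult_strict_left_mono)
  then show ?thesis
    by (rule mult_right_less_imp_less) simp
qed

lemma laguerre_pos_if_pair_pos:
  assumes "n \<le> m + 1" "0 \<le> x" "x \<le> 1" "i \<le> n"
    and "laguerre_term n m x (Suc (2 * i)) < laguerre_term n m x (2 * i)"
  shows "0 < laguerre n (real m) x"
proof -
  have "0 < (\<Sum>j\<le>Suc (2 * n). (-1) ^ j * laguerre_term n m x j)"
    using assms by (intro alternating_sum_pos[of _ i n] laguerre_term_Suc_le)
  then show ?thesis
    by (subst laguerre_eq_sum_laguerre_term[of n "Suc (2 * n)"]) auto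
qed

lemma laguerre_term_1_less_0:
  "x * real n < real (m + 1) \<Longrightarrow> laguerre_term n m x 1 < laguerre_term n m x 0"
  using laguerre_term_Suc_less[OF laguerre_term_0_pos] by simp

theorem proposition1:
  fixes n m :: nat
  assumes "m + 1 \<ge> n"
  shows "(\<forall>x::real. 0 \<le> x \<and> x < 1 \<longrightarrow> laguerre n (real m) x > 0)
         \<and> ((n, m) \<noteq> (1, 0) \<longrightarrow> laguerre n (real m) 1 > 0)"
proof -
  have "0 < laguerre n (real m) x" if "0 \<le> x" "x < 1" for x :: real
  proof -
    have "x * real n < real (m + 1)"
    proof (cases "n = 0")
      case False
      then have "x * real n < 1 * real n"
        using that by (intro mult_strict_right_mono) auto
      then show ?thesis
        using assms by simp
    qed simp
    then show ?thesis
      using laguerre_pos_if_pair_pos[of n m x 0] laguerre_term_1_less_0 that assms by simp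
  qed
  moreover have "0 < laguerre n (real m) 1" if "(n, m) \<noteq> (1, 0)"
  proof (cases "n = m + 1")
    case True
    with that have "2 \<le> n" by auto
    then have "laguerre_term n m 1 3 < laguerre_term n m 1 2"
      using True by (intro laguerre_term_Suc_less[of n m 1 2, simplified] laguerre_term_pos) auto
    then show ?thesis
      using laguerre_pos_if_pair_pos[of n m 1 1] \<open>2 \<le> n\<close> True by (simp add: numeral_3_eq_3)
  next
    case False
    then show ?thesis
      using laguerre_pos_if_pair_pos[of n m 1 0] laguerre_term_1_less_0[of 1] assms by simp
  qed
  ultimately show ?thesis by blast
qed

end
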